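(* Fix $\alpha_1,\alpha_2>0$ and, for a variable $n>0$, let $T=\alpha_1\log n$ and $L=\alpha_2\log n$. Use either lower or upper boundary values. Then for every $\kappa>0$ there are $\alpha_3>0$ and $n_0$ such that, with $K=\alpha_3\log n$ (rounded to an integer), for every solution $\mathbf u(t)$ of the mean-field equations with $\mathbf u(0)\in[0,1]^{\mathbb Z}$ and its $K$-restriction ${}^K\mathbf u$ with ${}^Ku_x(0)=u_x(0)$ for $|x|\le K$, $$|{}^Ku_x(t)-u_x(t)|\le n^{-\kappa}\quad\text{for all }n\ge n_0,\ |x|\le L,\ t\in[0,T].$$
   Context: Fix $a,b>0$ and $M\ge1$; for $x,y\in\mathbb Z$ write $y\sim x$ iff $0<|x-y|\le M$. Mean-field equations: $u_x'=(a u_x^2+\frac{b}{2M}\sum_{y\sim x}u_y^2)(1-u_x)-u_x$, $x\in\mathbb Z$. For an integer $K\ge1$ and boundary values $\beta\in\{0,1\}$, the $K$-restriction ${}^K\mathbf u(t)=({}^Ku_x(t))_{|x|\le K}$ is the solution of the finite system ${}^Ku_x'=(a\,{}^Ku_x^2+\frac{b}{2M}\sum_{y\sim x}\tilde u_y^2)(1-{}^Ku_x)-{}^Ku_x$ for $|x|\le K$, where $\tilde u_y={}^Ku_y$ if $|y|\le K$ and $\tilde u_y=\beta$ if $|y|>K$. $\beta=0$ is called lower boundary values, $\beta=1$ upper boundary values. *)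

theory Defs
  imports "HOL-Analysis.Analysis"
begin

definition nbr :: "nat \<Rightarrow> int \<Rightarrow> int set" where
  "nbr M x = {y. 0 < \<bar>x - y\<bar> \<and> \<bar>x - y\<bar> \<le> int M}"

definition mf_rhs :: "real \<Rightarrow> real \<Rightarrow> nat \<Rightarrow> (int \<Rightarrow> real) \<Rightarrow> int \<Rightarrow> real" where
  "mf_rhs a b M v x =
     (a * (v x)^2 + b / (2 * real M) * (\<Sum>y\<in>nbr M x. (v y)^2)) * (1 - v x) - v x"

definition mf_solution :: "real \<Rightarrow> real \<Rightarrow> nat \<Rightarrow> (real \<Rightarrow> int \<Rightarrow> real) \<Rightarrow> bool" where
  "mf_solution a b M u \<longleftrightarrow>
     (\<forall>x. \<forall>t\<ge>0. ((\<lambda>s. u s x) has_real_derivative mf_rhs a b M (u t) x) (at t within {0..}))"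

definition bext :: "int \<Rightarrow> real \<Rightarrow> (int \<Rightarrow> real) \<Rightarrow> int \<Rightarrow> real" where
  "bext K \<beta> v = (\<lambda>y. if \<bar>y\<bar> \<le> K then v y else \<beta>)"

text \<open>A solution of the K-restricted system with boundary values \<beta>, for t \<ge> 0
  (only the coordinates |x| \<le> K are constrained / meaningful).\<close>
definition restr_solution ::
  "real \<Rightarrow> real \<Rightarrow> nat \<Rightarrow> int \<Rightarrow> real \<Rightarrow> (real \<Rightarrow> int \<Rightarrow> real) \<Rightarrow> bool" where
  "restr_solution a b M K \<beta> ku \<longleftrightarrow>
     (\<forall>x. \<bar>x\<bar> \<le> K \<longrightarrow> (\<forall>t\<ge>0.
        ((\<lambda>s. ku s x) has_real_derivative mf_rhs a b M (bext K \<beta> (ku t)) x) (at t within {0..})))"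

end

theory Submission
  imports Defs
begin

(* Both systems keep their values in [0,1], where the right-hand side is Lipschitz, so the
  derivative of the error e x = ku x - u x on the box |x| <= K is bounded by the errors at x and
  at its 2M neighbours. Neighbours outside the box (only possible within distance M of the
  boundary) contribute an error of at most 1. Hence |e x t| stays strictly below the barrier
  exp (C t - (K + 1 - |x|)): moving to a neighbour changes the barrier by a factor at most e^M,
  which a large rate C absorbs, so the barrier can never be touched for the first time.
  For K = alpha3 log n with alpha3 = kappa + alpha2 + C alpha1, the barrier is at most n^-kappa
  whenever |x| <= alpha2 log n and t <= alpha1 log n. *)

lemma has_real_derivative_at_if_within_atLeast:
  assumes "(f has_real_derivative D) (at t within {a..})" and "a < t"
  shows "(f has_real_derivative D) (at t)"
proof -
  have "at t within {a..} = at t"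
    using assms(2) by (intro at_within_interior) simp
  with assms(1) show ?thesis
    by simp
qed

lemma le_if_deriv_nonpos_above:
  fixes \<phi> :: "real \<Rightarrow> real"
  assumes cont: "continuous_on {0..t1} \<phi>" and "0 \<le> t1" and "\<phi> 0 \<le> c"
    and deriv: "\<And>r. 0 < r \<Longrightarrow> r < t1 \<Longrightarrow> c < \<phi> r \<Longrightarrow> \<exists>D. DERIV \<phi> r :> D \<and> D \<le> 0"
  shows "\<phi> t1 \<le> c"
proof -
  define Z where "Z = {s \<in> {0..t1}. \<phi> s \<le> c}"
  have "closed Z"
    unfolding Z_def by (intro continuous_on_closed_Collect_le cont continuous_on_const) simp
  moreover have "Z = {0..t1} \<inter> Z"
    by (auto simp: Z_def)
  ultimately have "compact Z"
    by (metis compact_Icc compact_Int_closed)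
  moreover have "0 \<in> Z"
    using assms by (simp add: Z_def)
  ultimately obtain s where "s \<in> Z" and s_max: "\<forall>r\<in>Z. r \<le> s"
    using compact_attains_sup by blast
  then have s: "0 \<le> s" "s \<le> t1" "\<phi> s \<le> c"
    by (auto simp: Z_def)
  have "\<phi> t1 \<le> \<phi> s"
  proof (rule DERIV_nonpos_imp_decreasing_open[OF \<open>s \<le> t1\<close>])
    fix r assume "s < r" "r < t1"
    have "c < \<phi> r"
    proof (rule ccontr)
      assume "\<not> c < \<phi> r"
      with s \<open>s < r\<close> \<open>r < t1\<close> have "r \<in> Z"
        by (simp add: Z_def)
      with s_max \<open>s < r\<close> show False
        by fastforce
    qed
    with \<open>s < r\<close> \<open>r < t1\<close> s show "\<exists>D. DERIV \<phi> r :> D \<and> D \<le> 0"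
      by (intro deriv) auto
  qed (use cont s in \<open>auto intro: continuous_on_subset\<close>)
  with s show ?thesis
    by simp
qed

lemma logistic_type_unit_interval_invariant:
  fixes \<phi> S :: "real \<Rightarrow> real"
  assumes "0 \<le> a" and S_nonneg: "\<And>t. 0 \<le> S t" and "0 \<le> \<phi> 0" "\<phi> 0 \<le> 1"
    and deriv: "\<And>t. 0 \<le> t \<Longrightarrow>
      (\<phi> has_real_derivative (a * (\<phi> t)^2 + S t) * (1 - \<phi> t) - \<phi> t) (at t within {0..})"
    and "0 \<le> t"
  shows "0 \<le> \<phi> t \<and> \<phi> t \<le> 1"
proof -
  define F where "F r = (a * (\<phi> r)^2 + S r) * (1 - \<phi> r) - \<phi> r" for r
  have gain_nonneg: "0 \<le> a * (\<phi> r)^2 + S r" for r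
    using \<open>0 \<le> a\<close> S_nonneg by simp
  have deriv_at: "DERIV \<phi> r :> F r" if "0 < r" for r
    using deriv[of r] that by (simp add: F_def has_real_derivative_at_if_within_atLeast)
  have "continuous_on {0..} \<phi>"
    using deriv by (intro DERIV_continuous_on) auto
  then have cont: "continuous_on {0..t} \<phi>"
    by (rule continuous_on_subset) auto
  have "\<phi> t \<le> 1"
  proof (rule le_if_deriv_nonpos_above[OF cont \<open>0 \<le> t\<close> \<open>\<phi> 0 \<le> 1\<close>])
    fix r assume "0 < r" "1 < \<phi> r"
    then have "F r \<le> 0"
      using gain_nonneg[of r] unfolding F_def by (smt (verit) mult_nonneg_nonpos)
    with deriv_at \<open>0 < r\<close> show "\<exists>D. DERIV \<phi> r :> D \<and> D \<le> 0"
      by blast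
  qed
  moreover have "- \<phi> t \<le> 0"
  proof (rule le_if_deriv_nonpos_above[where \<phi> = "\<lambda>r. - \<phi> r"])
    fix r assume "0 < r" "0 < - \<phi> r"
    then have "0 \<le> F r"
      using gain_nonneg[of r] unfolding F_def by (smt (verit) mult_nonneg_nonneg)
    with deriv_at[OF \<open>0 < r\<close>] show "\<exists>D. DERIV (\<lambda>r. - \<phi> r) r :> D \<and> D \<le> 0"
      using DERIV_minus by fastforce
  qed (use cont assms in \<open>auto intro: continuous_intros\<close>)
  ultimately show ?thesis
    by simp
qed

lemma mf_site_unit_interval:
  assumes "0 \<le> a" "0 \<le> b"
    and deriv: "\<And>t. 0 \<le> t \<Longrightarrow> (\<phi> has_real_derivative mf_rhs a b M (v t) x) (at t within {0..})"
    and site: "\<And>t. v t x = \<phi> t"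
    and "0 \<le> \<phi> 0" "\<phi> 0 \<le> 1" "0 \<le> t"
  shows "0 \<le> \<phi> t \<and> \<phi> t \<le> 1"
proof -
  define S where "S t = b / (2 * real M) * (\<Sum>y\<in>nbr M x. (v t y)^2)" for t
  have "0 \<le> S t" for t
    using \<open>0 \<le> b\<close> by (simp add: S_def sum_nonneg)
  moreover have "(\<phi> has_real_derivative (a * (\<phi> t)^2 + S t) * (1 - \<phi> t) - \<phi> t) (at t within {0..})"
    if "0 \<le> t" for t
    using deriv[OF that] by (simp add: mf_rhs_def S_def site)
  ultimately show ?thesis
    using logistic_type_unit_interval_invariant[of a S \<phi> t] assms by blast
qed

lemma mf_solution_unit_interval:
  assumes "0 \<le> a" "0 \<le> b" "mf_solution a b M u"
    and "\<And>y. 0 \<le> u 0 y \<and> u 0 y \<le> 1" and "0 \<le> t"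
  shows "0 \<le> u t x \<and> u t x \<le> 1"
  using mf_site_unit_interval[where \<phi> = "\<lambda>s. u s x" and v = u and x = x and t = t] assms
  unfolding mf_solution_def by blast

lemma restr_solution_unit_interval:
  assumes "0 \<le> a" "0 \<le> b" "restr_solution a b M K \<beta> ku" "0 \<le> \<beta>" "\<beta> \<le> 1"
    and "\<And>y. \<bar>y\<bar> \<le> K \<Longrightarrow> 0 \<le> ku 0 y \<and> ku 0 y \<le> 1" and "0 \<le> t"
  shows "0 \<le> bext K \<beta> (ku t) x \<and> bext K \<beta> (ku t) x \<le> 1"
proof (cases "\<bar>x\<bar> \<le> K")
  case True
  have "0 \<le> ku t x \<and> ku t x \<le> 1"
    by (rule mf_site_unit_interval[where a = a and b = b and M = M and \<phi> = "\<lambda>s. ku s x"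
        and v = "\<lambda>s. bext K \<beta> (ku s)" and x = x and t = t])
      (use assms True in \<open>auto simp: restr_solution_def bext_def\<close>)
  with True show ?thesis
    by (simp add: bext_def)
qed (use assms in \<open>simp add: bext_def\<close>)

lemma nbr_eq_interval_minus: "nbr M x = {x - int M .. x + int M} - {x}"
  unfolding nbr_def by auto

lemma card_nbr: "card (nbr M x) = 2 * M"
  unfolding nbr_eq_interval_minus by (simp add: card_Diff_singleton)

lemma abs_le_if_mem_nbr: "y \<in> nbr M x \<Longrightarrow> \<bar>y\<bar> \<le> \<bar>x\<bar> + int M"
  unfolding nbr_def by auto

lemma abs_square_diff_le:
  fixes p q :: real
  assumes "0 \<le> p" "p \<le> 1" "0 \<le> q" "q \<le> 1"
  shows "\<bar>p^2 - q^2\<bar> \<le> 2 * \<bar>p - q\<bar>"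
proof -
  have "p^2 - q^2 = (p - q) * (p + q)"
    by (simp add: power2_eq_square algebra_simps)
  then have "\<bar>p^2 - q^2\<bar> = \<bar>p - q\<bar> * (p + q)"
    using assms by (simp add: abs_mult)
  also have "\<dots> \<le> \<bar>p - q\<bar> * 2"
    using assms by (intro mult_left_mono) auto
  finally show ?thesis
    by simp
qed

lemma abs_sum_square_diff_le:
  fixes v w :: "'a \<Rightarrow> real"
  assumes "\<And>y. y \<in> A \<Longrightarrow> 0 \<le> v y \<and> v y \<le> 1" "\<And>y. y \<in> A \<Longrightarrow> 0 \<le> w y \<and> w y \<le> 1"
  shows "\<bar>(\<Sum>y\<in>A. (v y)^2) - (\<Sum>y\<in>A. (w y)^2)\<bar> \<le> 2 * (\<Sum>y\<in>A. \<bar>v y - w y\<bar>)"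
proof -
  have "\<bar>(\<Sum>y\<in>A. (v y)^2) - (\<Sum>y\<in>A. (w y)^2)\<bar> \<le> (\<Sum>y\<in>A. \<bar>(v y)^2 - (w y)^2\<bar>)"
    unfolding sum_subtractf[symmetric] by (rule sum_abs)
  also have "\<dots> \<le> (\<Sum>y\<in>A. 2 * \<bar>v y - w y\<bar>)"
    using assms by (intro sum_mono abs_square_diff_le) auto
  finally show ?thesis
    by (simp add: sum_distrib_left)
qed

lemma mf_gain_bounds:
  fixes w :: "int \<Rightarrow> real"
  assumes "0 \<le> a" "0 \<le> b" "1 \<le> M" and w: "\<And>y. y \<in> insert x (nbr M x) \<Longrightarrow> 0 \<le> w y \<and> w y \<le> 1"
  shows "0 \<le> a * (w x)^2 + b / (2 * real M) * (\<Sum>y\<in>nbr M x. (w y)^2)"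
    and "a * (w x)^2 + b / (2 * real M) * (\<Sum>y\<in>nbr M x. (w y)^2) \<le> a + b"
proof -
  have "(\<Sum>y\<in>nbr M x. (w y)^2) \<le> (\<Sum>y\<in>nbr M x. 1)"
    using w by (intro sum_mono) (simp add: power_le_one)
  then have "b / (2 * real M) * (\<Sum>y\<in>nbr M x. (w y)^2) \<le> b / (2 * real M) * (2 * real M)"
    using assms card_nbr[of M x] by (intro mult_left_mono) auto
  moreover have "a * (w x)^2 \<le> a"
    using \<open>0 \<le> a\<close> w[of x] by (simp add: mult_left_le power_le_one)
  ultimately show "a * (w x)^2 + b / (2 * real M) * (\<Sum>y\<in>nbr M x. (w y)^2) \<le> a + b"
    using \<open>1 \<le> M\<close> by simp
  show "0 \<le> a * (w x)^2 + b / (2 * real M) * (\<Sum>y\<in>nbr M x. (w y)^2)"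
    using assms(1,2) by (simp add: sum_nonneg)
qed

lemma mf_rhs_lipschitz:
  fixes v w :: "int \<Rightarrow> real"
  assumes "0 \<le> a" "0 \<le> b" "1 \<le> M"
    and v: "\<And>y. y \<in> insert x (nbr M x) \<Longrightarrow> 0 \<le> v y \<and> v y \<le> 1"
    and w: "\<And>y. y \<in> insert x (nbr M x) \<Longrightarrow> 0 \<le> w y \<and> w y \<le> 1"
  shows "\<bar>mf_rhs a b M v x - mf_rhs a b M w x\<bar>
    \<le> (3 * a + b + 1) * \<bar>v x - w x\<bar> + b / real M * (\<Sum>y\<in>nbr M x. \<bar>v y - w y\<bar>)"
proof -
  define c where "c = b / (2 * real M)"
  define \<Sigma> where "\<Sigma> = (\<Sum>y\<in>nbr M x. \<bar>v y - w y\<bar>)"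
  define P where "P f = a * (f x)^2 + c * (\<Sum>y\<in>nbr M x. (f y)^2)" for f :: "int \<Rightarrow> real"
  have "0 \<le> c"
    using assms by (simp add: c_def)
  have vx: "0 \<le> v x" "v x \<le> 1" and wx: "0 \<le> w x" "w x \<le> 1"
    using v w by auto
  have "P v - P w = a * ((v x)^2 - (w x)^2)
      + c * ((\<Sum>y\<in>nbr M x. (v y)^2) - (\<Sum>y\<in>nbr M x. (w y)^2))"
    unfolding P_def by (simp add: algebra_simps)
  then have "\<bar>P v - P w\<bar> \<le> a * \<bar>(v x)^2 - (w x)^2\<bar>
      + c * \<bar>(\<Sum>y\<in>nbr M x. (v y)^2) - (\<Sum>y\<in>nbr M x. (w y)^2)\<bar>"
    using \<open>0 \<le> a\<close> \<open>0 \<le> c\<close> by (simp add: abs_mult abs_triangle_ineq[THEN order_trans])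
  also have "\<dots> \<le> a * (2 * \<bar>v x - w x\<bar>) + c * (2 * \<Sigma>)"
    unfolding \<Sigma>_def using assms \<open>0 \<le> c\<close> abs_square_diff_le[OF vx wx]
    by (intro add_mono mult_left_mono abs_sum_square_diff_le) auto
  finally have P_diff: "\<bar>P v - P w\<bar> \<le> 2 * a * \<bar>v x - w x\<bar> + b / real M * \<Sigma>"
    using \<open>1 \<le> M\<close> by (simp add: c_def algebra_simps)
  have Pw: "0 \<le> P w" "P w \<le> a + b"
    unfolding P_def c_def using mf_gain_bounds[OF assms(1-3) w] by auto
  have "mf_rhs a b M v x - mf_rhs a b M w x = (P v - P w) * (1 - v x) + (P w + 1) * (w x - v x)"
    unfolding mf_rhs_def P_def c_def by (simp add: algebra_simps add_divide_distrib[symmetric])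
  also have "\<bar>\<dots>\<bar> \<le> \<bar>P v - P w\<bar> + (a + b + 1) * \<bar>v x - w x\<bar>"
  proof -
    have "\<bar>(P v - P w) * (1 - v x)\<bar> \<le> \<bar>P v - P w\<bar>"
      using vx by (simp add: abs_mult mult_left_le)
    moreover have "\<bar>(P w + 1) * (w x - v x)\<bar> \<le> (a + b + 1) * \<bar>v x - w x\<bar>"
      using Pw by (simp add: abs_mult abs_minus_commute mult_right_mono)
    ultimately show ?thesis
      by (meson abs_triangle_ineq add_mono order_trans)
  qed
  finally show ?thesis
    using P_diff unfolding \<Sigma>_def by (simp add: algebra_simps)
qed

lemma first_zero_of_finite_family:
  fixes F :: "'a \<Rightarrow> real \<Rightarrow> real"
  assumes "finite B" and cont: "\<And>y. y \<in> B \<Longrightarrow> continuous_on {0..} (F y)"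
    and pos: "\<And>y. y \<in> B \<Longrightarrow> 0 < F y 0"
    and "x0 \<in> B" "0 \<le> t1" "F x0 t1 \<le> 0"
  obtains ts x where "0 < ts" "x \<in> B" "F x ts = 0"
    and "\<And>y t. y \<in> B \<Longrightarrow> 0 \<le> t \<Longrightarrow> t \<le> ts \<Longrightarrow> 0 \<le> F y t"
proof -
  define Z where "Z = (\<Union>y\<in>B. {t \<in> {0..t1}. F y t \<le> 0})"
  have cont_t1: "continuous_on {0..t1} (F y)" if "y \<in> B" for y
    using cont[OF that] by (rule continuous_on_subset) auto
  then have "closed Z"
    unfolding Z_def using \<open>finite B\<close>
    by (intro closed_UN ballI continuous_on_closed_Collect_le continuous_on_const) auto
  moreover have "Z = {0..t1} \<inter> Z"
    by (auto simp: Z_def)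
  ultimately have "compact Z"
    by (metis compact_Icc compact_Int_closed)
  moreover have "t1 \<in> Z"
    using assms by (auto simp: Z_def)
  ultimately have "\<exists>ts\<in>Z. \<forall>t\<in>Z. ts \<le> t"
    by (intro compact_attains_inf) auto
  then obtain ts where "ts \<in> Z" and ts_min: "\<And>t. t \<in> Z \<Longrightarrow> ts \<le> t"
    by blast
  then obtain x where x: "x \<in> B" "0 \<le> ts" "ts \<le> t1" "F x ts \<le> 0"
    by (auto simp: Z_def)
  have nonneg: "0 \<le> F y t" if "y \<in> B" "0 \<le> t" "t \<le> ts" for y t
  proof (rule ccontr)
    assume "\<not> 0 \<le> F y t"
    moreover have "continuous_on {0..t} (F y)"
      using cont_t1[OF \<open>y \<in> B\<close>] by (rule continuous_on_subset) (use x that in auto)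
    ultimately obtain t' where "0 \<le> t'" "t' \<le> t" "F y t' = 0"
      using IVT2'[of "F y" t 0 0] pos[OF \<open>y \<in> B\<close>] \<open>0 \<le> t\<close> by (auto simp: not_le)
    with that x have "t' \<in> Z"
      unfolding Z_def by (auto intro!: bexI[of _ y])
    then have "t' = t"
      using ts_min[of t'] \<open>t' \<le> t\<close> \<open>t \<le> ts\<close> by simp
    with \<open>F y t' = 0\<close> \<open>\<not> 0 \<le> F y t\<close> show False
      by simp
  qed
  have "ts \<noteq> 0"
    using pos[OF x(1)] x(4) by auto
  with x nonneg[of x ts] have "0 < ts" "F x ts = 0"
    by auto
  with x(1) nonneg show thesis
    using that by blast
qed

lemma abs_less_by_first_crossing:
  fixes g h :: "'a \<Rightarrow> real \<Rightarrow> real"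
  assumes "finite B"
    and g: "\<And>x t. x \<in> B \<Longrightarrow> 0 \<le> t \<Longrightarrow> (g x has_real_derivative g' x t) (at t within {0..})"
    and h: "\<And>x t. x \<in> B \<Longrightarrow> 0 \<le> t \<Longrightarrow> (h x has_real_derivative h' x t) (at t within {0..})"
    and init: "\<And>x. x \<in> B \<Longrightarrow> \<bar>g x 0\<bar> < h x 0"
    and crossing: "\<And>x t. x \<in> B \<Longrightarrow> 0 < t \<Longrightarrow> (\<And>y. y \<in> B \<Longrightarrow> \<bar>g y t\<bar> \<le> h y t) \<Longrightarrow>
      \<bar>g x t\<bar> = h x t \<Longrightarrow> \<bar>g' x t\<bar> < h' x t"
    and "x \<in> B" "0 \<le> t"
  shows "\<bar>g x t\<bar> < h x t"
proof (rule ccontr)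
  assume "\<not> \<bar>g x t\<bar> < h x t"
  moreover have "continuous_on {0..} (\<lambda>s. h y s - \<bar>g y s\<bar>)" if "y \<in> B" for y
  proof -
    have "continuous_on {0..} (g y)"
      using g[OF that] by (intro DERIV_continuous_on) simp
    moreover have "continuous_on {0..} (h y)"
      using h[OF that] by (intro DERIV_continuous_on) simp
    ultimately show ?thesis
      by (intro continuous_intros)
  qed
  ultimately obtain ts z where ts: "0 < ts" "z \<in> B" "h z ts - \<bar>g z ts\<bar> = 0"
    and below: "\<And>y s. y \<in> B \<Longrightarrow> 0 \<le> s \<Longrightarrow> s \<le> ts \<Longrightarrow> 0 \<le> h y s - \<bar>g y s\<bar>"
    using init \<open>finite B\<close> \<open>x \<in> B\<close> \<open>0 \<le> t\<close>
    by (elim first_zero_of_finite_family[of B "\<lambda>y s. h y s - \<bar>g y s\<bar>" x t]) auto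
  define \<sigma> where "\<sigma> = (if 0 \<le> g z ts then 1 else - 1 :: real)"
  have \<sigma>: "\<sigma> * r \<le> \<bar>r\<bar>" "\<sigma> * g z ts = \<bar>g z ts\<bar>" for r
    by (auto simp: \<sigma>_def)
  define \<psi> where "\<psi> s = \<sigma> * g z s - h z s" for s
  have "\<bar>g' z ts\<bar> < h' z ts"
    using below ts by (intro crossing) auto
  then have "\<sigma> * g' z ts - h' z ts < 0"
    using \<sigma>(1)[of "g' z ts"] by simp
  moreover have "(\<psi> has_real_derivative \<sigma> * g' z ts - h' z ts) (at ts)"
    unfolding \<psi>_def using g[OF ts(2)] h[OF ts(2)] ts(1)
    by (intro DERIV_diff DERIV_cmult has_real_derivative_at_if_within_atLeast[where a = 0]) auto
  ultimately obtain d where "0 < d" and dec: "\<And>e. 0 < e \<Longrightarrow> e < d \<Longrightarrow> \<psi> ts < \<psi> (ts - e)"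
    using DERIV_neg_dec_left by metis
  define e where "e = min d ts / 2"
  have "0 < e" "e < d" "e \<le> ts"
    using \<open>0 < d\<close> ts(1) by (auto simp: e_def)
  then have "\<psi> ts < \<psi> (ts - e)"
    by (intro dec)
  moreover have "\<psi> ts = 0"
    using \<sigma>(2) ts(3) by (simp add: \<psi>_def)
  moreover have "\<psi> (ts - e) \<le> 0"
    using \<sigma>(1)[of "g z (ts - e)"] below[OF ts(2), of "ts - e"] \<open>0 < e\<close> \<open>e \<le> ts\<close>
    by (simp add: \<psi>_def)
  ultimately show False
    by simp
qed

definition boundary_barrier :: "real \<Rightarrow> int \<Rightarrow> int \<Rightarrow> real \<Rightarrow> real" where
  "boundary_barrier C K x t = exp (C * t - real_of_int (K + 1 - \<bar>x\<bar>))"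

lemma boundary_barrier_pos: "0 < boundary_barrier C K x t"
  by (simp add: boundary_barrier_def)

lemma has_real_derivative_boundary_barrier:
  "(boundary_barrier C K x has_real_derivative C * boundary_barrier C K x t) (at t within S)"
  unfolding boundary_barrier_def by (auto intro!: derivative_eq_intros)

lemma boundary_barrier_nbr_le:
  assumes "y \<in> nbr M x"
  shows "boundary_barrier C K y t \<le> exp (real M) * boundary_barrier C K x t"
proof -
  have "real_of_int \<bar>y\<bar> \<le> real_of_int \<bar>x\<bar> + real M"
    using abs_le_if_mem_nbr[OF assms] by linarith
  then show ?thesis
    by (simp add: boundary_barrier_def flip: exp_add)
qed

lemma one_le_boundary_barrier_nbr_outside:
  assumes "y \<in> nbr M x" "K < \<bar>y\<bar>" "0 \<le> C" "0 \<le> t"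
  shows "1 \<le> exp (real M) * boundary_barrier C K x t"
proof -
  have "real_of_int (K + 1 - \<bar>x\<bar>) \<le> real M"
    using abs_le_if_mem_nbr[OF assms(1)] assms(2) by linarith
  moreover have "0 \<le> C * t"
    using assms(3,4) by simp
  ultimately show ?thesis
    by (simp add: boundary_barrier_def flip: exp_add)
qed

lemma mf_rhs_diff_le_boundary_barrier:
  fixes v w :: "int \<Rightarrow> real"
  assumes "0 \<le> a" "0 \<le> b" "1 \<le> M" "0 \<le> C" "0 \<le> t" "\<bar>x\<bar> \<le> K"
    and v: "\<And>y. 0 \<le> v y \<and> v y \<le> 1" and w: "\<And>y. 0 \<le> w y \<and> w y \<le> 1"
    and close: "\<And>y. \<bar>y\<bar> \<le> K \<Longrightarrow> \<bar>v y - w y\<bar> \<le> boundary_barrier C K y t"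
  shows "\<bar>mf_rhs a b M v x - mf_rhs a b M w x\<bar>
    \<le> (3 * a + b + 1 + 2 * b * exp (real M)) * boundary_barrier C K x t"
proof -
  let ?h = "boundary_barrier C K x t"
  have nbr_diff: "\<bar>v y - w y\<bar> \<le> exp (real M) * ?h" if "y \<in> nbr M x" for y
  proof (cases "\<bar>y\<bar> \<le> K")
    case True
    then show ?thesis
      using close boundary_barrier_nbr_le[OF that] by (blast intro: order_trans)
  next
    case False
    have "\<bar>v y - w y\<bar> \<le> 1"
      using v[of y] w[of y] by linarith
    also have "\<dots> \<le> exp (real M) * ?h"
      using False assms by (intro one_le_boundary_barrier_nbr_outside[OF that]) auto
    finally show ?thesis .
  qed
  have "(\<Sum>y\<in>nbr M x. \<bar>v y - w y\<bar>) \<le> (\<Sum>y\<in>nbr M x. exp (real M) * ?h)"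
    using nbr_diff by (rule sum_mono)
  also have "\<dots> = 2 * real M * exp (real M) * ?h"
    by (simp add: card_nbr)
  finally have sum_diff: "(\<Sum>y\<in>nbr M x. \<bar>v y - w y\<bar>) \<le> 2 * real M * exp (real M) * ?h" .
  have "\<bar>mf_rhs a b M v x - mf_rhs a b M w x\<bar>
      \<le> (3 * a + b + 1) * \<bar>v x - w x\<bar> + b / real M * (\<Sum>y\<in>nbr M x. \<bar>v y - w y\<bar>)"
    using assms by (intro mf_rhs_lipschitz) auto
  also have "\<dots> \<le> (3 * a + b + 1) * ?h + b / real M * (2 * real M * exp (real M) * ?h)"
    using assms close sum_diff by (intro add_mono mult_left_mono) auto
  also have "\<dots> = (3 * a + b + 1 + 2 * b * exp (real M)) * ?h"
    using \<open>1 \<le> M\<close> by (simp add: algebra_simps)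
  finally show ?thesis .
qed

lemma restriction_error_lt_boundary_barrier:
  assumes "0 \<le> a" "0 \<le> b" "1 \<le> M" "0 \<le> \<beta>" "\<beta> \<le> 1"
    and C: "3 * a + b + 1 + 2 * b * exp (real M) < C"
    and u: "mf_solution a b M u" and u0: "\<And>y. 0 \<le> u 0 y \<and> u 0 y \<le> 1"
    and ku: "restr_solution a b M K \<beta> ku" and ku0: "\<And>y. \<bar>y\<bar> \<le> K \<Longrightarrow> ku 0 y = u 0 y"
    and "\<bar>x\<bar> \<le> K" "0 \<le> t"
  shows "\<bar>ku t x - u t x\<bar> < boundary_barrier C K x t"
proof -
  define e where "e y s = ku s y - u s y" for y s
  define D where "D y s = mf_rhs a b M (bext K \<beta> (ku s)) y - mf_rhs a b M (u s) y" for y s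
  have deriv: "(e y has_real_derivative D y s) (at s within {0..})" if "y \<in> {-K..K}" "0 \<le> s" for y s
    using ku u that unfolding restr_solution_def mf_solution_def e_def D_def
    by (intro DERIV_diff) (simp_all add: abs_le_iff)
  have u_unit: "0 \<le> u s z \<and> u s z \<le> 1" if "0 \<le> s" for s z
    using assms(1,2) u u0 that by (rule mf_solution_unit_interval)
  have v_unit: "0 \<le> bext K \<beta> (ku s) z \<and> bext K \<beta> (ku s) z \<le> 1" if "0 \<le> s" for s z
    using assms(1,2) ku assms(4,5) _ that
  proof (rule restr_solution_unit_interval)
    show "0 \<le> ku 0 y \<and> ku 0 y \<le> 1" if "\<bar>y\<bar> \<le> K" for y
      using u0[of y] ku0[OF that] by simp
  qed
  have crossing: "\<bar>D y s\<bar> < C * boundary_barrier C K y s"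
    if "y \<in> {-K..K}" "0 < s"
      and close: "\<And>z. z \<in> {-K..K} \<Longrightarrow> \<bar>e z s\<bar> \<le> boundary_barrier C K z s" for y s
  proof -
    have "\<bar>D y s\<bar> \<le> (3 * a + b + 1 + 2 * b * exp (real M)) * boundary_barrier C K y s"
      unfolding D_def
    proof (rule mf_rhs_diff_le_boundary_barrier)
      show "0 \<le> bext K \<beta> (ku s) z \<and> bext K \<beta> (ku s) z \<le> 1" for z
        using v_unit \<open>0 < s\<close> by simp
      show "0 \<le> u s z \<and> u s z \<le> 1" for z
        using u_unit \<open>0 < s\<close> by simp
      show "\<bar>bext K \<beta> (ku s) z - u s z\<bar> \<le> boundary_barrier C K z s" if "\<bar>z\<bar> \<le> K" for z
        using close[of z] that by (simp add: bext_def e_def abs_le_iff)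
      show "0 \<le> C"
        using C assms by (smt (verit) exp_ge_zero mult_nonneg_nonneg)
    qed (use assms that in \<open>simp_all add: abs_le_iff\<close>)
    also have "\<dots> < C * boundary_barrier C K y s"
      using C boundary_barrier_pos by (rule mult_strict_right_mono)
    finally show ?thesis .
  qed
  have "\<bar>e x t\<bar> < boundary_barrier C K x t"
  proof (rule abs_less_by_first_crossing[where B = "{-K..K}" and g = e and g' = D
        and h = "boundary_barrier C K" and h' = "\<lambda>y s. C * boundary_barrier C K y s"])
    show "\<bar>e y 0\<bar> < boundary_barrier C K y 0" if "y \<in> {-K..K}" for y
      using that by (simp add: e_def ku0 abs_le_iff boundary_barrier_pos)
    show "\<bar>D y s\<bar> < C * boundary_barrier C K y s"
      if "y \<in> {-K..K}" "0 < s" "\<And>z. z \<in> {-K..K} \<Longrightarrow> \<bar>e z s\<bar> \<le> boundary_barrier C K z s"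
      for y s
      using that by (rule crossing)
  qed (use deriv assms in \<open>simp_all add: abs_le_iff has_real_derivative_boundary_barrier\<close>)
  then show ?thesis
    by (simp add: e_def)
qed

lemma boundary_barrier_le_powr:
  fixes n :: real
  assumes "0 < n" "0 \<le> C" "real_of_int \<bar>x\<bar> \<le> \<alpha>2 * ln n" "t \<le> \<alpha>1 * ln n"
  shows "boundary_barrier C \<lfloor>(\<kappa> + \<alpha>2 + C * \<alpha>1) * ln n\<rfloor> x t \<le> n powr (- \<kappa>)"
proof -
  let ?K = "\<lfloor>(\<kappa> + \<alpha>2 + C * \<alpha>1) * ln n\<rfloor>"
  have "(\<kappa> + \<alpha>2 + C * \<alpha>1) * ln n < real_of_int ?K + 1"
    by linarith
  moreover have "C * t \<le> C * (\<alpha>1 * ln n)"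
    using assms(4,2) by (rule mult_left_mono)
  ultimately have "C * t - real_of_int (?K + 1 - \<bar>x\<bar>) \<le> - \<kappa> * ln n"
    using assms(3) by (simp add: algebra_simps)
  then show ?thesis
    using \<open>0 < n\<close> by (simp add: boundary_barrier_def powr_def)
qed

theorem lemma4p7:
  fixes a b :: real and M :: nat and \<alpha>1 \<alpha>2 :: real and \<beta> :: real
  assumes "a > 0" and "b > 0" and "M \<ge> 1"
    and "\<alpha>1 > 0" and "\<alpha>2 > 0"
    and "\<beta> \<in> {0, 1}"
  shows "\<forall>\<kappa>>0. \<exists>\<alpha>3>0. \<exists>n0::nat. \<forall>n::nat. n \<ge> n0 \<longrightarrow>
    (let K = \<lfloor>\<alpha>3 * ln (real n)\<rfloor> in
     \<forall>u ku. mf_solution a b M u \<and> (\<forall>x. 0 \<le> u 0 x \<and> u 0 x \<le> 1) \<and>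
            restr_solution a b M K \<beta> ku \<and> (\<forall>x. \<bar>x\<bar> \<le> K \<longrightarrow> ku 0 x = u 0 x) \<longrightarrow>
       (\<forall>x t. real_of_int \<bar>x\<bar> \<le> \<alpha>2 * ln (real n) \<and> 0 \<le> t \<and> t \<le> \<alpha>1 * ln (real n) \<longrightarrow>
          \<bar>ku t x - u t x\<bar> \<le> real n powr (- \<kappa>)))"
proof -
  define C where "C = 3 * a + b + 2 + 2 * b * exp (real M)"
  have "0 \<le> C"
    using assms by (simp add: C_def)
  have error_le: "\<bar>ku t x - u t x\<bar> \<le> real n powr (- \<kappa>)"
    if "0 < \<kappa>" "1 \<le> n" and "mf_solution a b M u" "\<forall>x. 0 \<le> u 0 x \<and> u 0 x \<le> 1"
      and "restr_solution a b M \<lfloor>(\<kappa> + \<alpha>2 + C * \<alpha>1) * ln (real n)\<rfloor> \<beta> ku"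
      and "\<forall>x. \<bar>x\<bar> \<le> \<lfloor>(\<kappa> + \<alpha>2 + C * \<alpha>1) * ln (real n)\<rfloor> \<longrightarrow> ku 0 x = u 0 x"
      and x: "real_of_int \<bar>x\<bar> \<le> \<alpha>2 * ln (real n)" and "0 \<le> t" "t \<le> \<alpha>1 * ln (real n)"
    for \<kappa> n u ku x t
  proof -
    let ?K = "\<lfloor>(\<kappa> + \<alpha>2 + C * \<alpha>1) * ln (real n)\<rfloor>"
    have "\<alpha>2 * ln (real n) \<le> (\<kappa> + \<alpha>2 + C * \<alpha>1) * ln (real n)"
      using that \<open>0 \<le> C\<close> assms by (intro mult_right_mono) auto
    with x have "\<bar>x\<bar> \<le> ?K"
      by (simp add: le_floor_iff)
    then have "\<bar>ku t x - u t x\<bar> < boundary_barrier C ?K x t"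
      using assms that by (intro restriction_error_lt_boundary_barrier) (auto simp: C_def)
    also have "\<dots> \<le> real n powr (- \<kappa>)"
      using that \<open>0 \<le> C\<close> by (intro boundary_barrier_le_powr) auto
    finally show ?thesis
      by simp
  qed
  have "0 < \<kappa> + \<alpha>2 + C * \<alpha>1" if "0 < \<kappa>" for \<kappa>
    using that \<open>0 \<le> C\<close> assms by (simp add: add_pos_nonneg)
  with error_le show ?thesis
    unfolding Let_def
    by (intro allI impI, rule_tac x = "\<kappa> + \<alpha>2 + C * \<alpha>1" in exI) (auto intro!: exI[of _ 1])
qed

end
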